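(* Let $G$ be a map graph with a corresponding planar bipartite graph $B$, let $\ell\in\mathbb{N}$, let $\mathcal{D}=(T,\beta_{\mathcal{D}})$ be a tree decomposition of $B$ of width less than $\ell$, and let $\mathcal{D}'=(T,\beta_{\mathcal{D}'})$ be the pair defined by $\beta_{\mathcal{D}'}(t)=(\beta_{\mathcal{D}}(t)\cap V(G))\cup\bigcup_{s\in\beta_{\mathcal{D}}(t)\cap S(G)}\big(N_B(s)\cap\gamma_{\mathcal{D}}(t)\big)$ for every node $t\in V(T)$. Then $\mathcal{D}'$ is a tree decomposition of $G$.
   Context: All graphs are finite and simple. For a bipartite graph $B$ with bipartition $V(B)=W\uplus U$, the half-square of $B$ is the graph with vertex set $W$ in which two vertices are adjacent iff they are at distance exactly $2$ in $B$. A graph $G$ is a map graph iff it is the half-square of some planar bipartite graph $B$; such a $B$ (with $W=V(G)$) is a corresponding planar bipartite graph, and the vertices of $U$ are called special vertices, denoted $S(G)$. A tree decomposition of a graph $H$ is a pair $(T,\beta)$ with $T$ a rooted tree and $\beta:V(T)\to 2^{V(H)}$ such that every vertex lies in some bag, every edge has both endpoints in some bag, and for every vertex $v$ the nodes whose bags contain $v$ induce a connected subtree; its width is the maximum bag size minus one. For a node $t$, $\gamma_{\mathcal{D}}(t)$ denotes the union of the bags $\beta_{\mathcal{D}}(t')$ over $t$ and all its descendants $t'$. *)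

theory Defs
  imports "HOL-Analysis.Analysis"
begin

definition simple_graph :: "'a set \<Rightarrow> 'a set set \<Rightarrow> bool" where
  "simple_graph V E \<longleftrightarrow> finite V \<and> (\<forall>e\<in>E. e \<subseteq> V \<and> card e = 2)"

definition nbhd :: "'a set set \<Rightarrow> 'a \<Rightarrow> 'a set" where
  "nbhd E v = {u. {v, u} \<in> E}"

definition is_walk :: "'a set \<Rightarrow> 'a set set \<Rightarrow> 'a list \<Rightarrow> bool" where
  "is_walk V E p \<longleftrightarrow> p \<noteq> [] \<and> set p \<subseteq> V \<and> (\<forall>i. Suc i < length p \<longrightarrow> {p ! i, p ! Suc i} \<in> E)"

definition is_path_between :: "'a set \<Rightarrow> 'a set set \<Rightarrow> 'a \<Rightarrow> 'a \<Rightarrow> 'a list \<Rightarrow> bool" where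
  "is_path_between V E u v p \<longleftrightarrow> is_walk V E p \<and> distinct p \<and> hd p = u \<and> last p = v"

definition induces_connected :: "'a set \<Rightarrow> 'a set set \<Rightarrow> 'a set \<Rightarrow> bool" where
  "induces_connected V E X \<longleftrightarrow> X \<subseteq> V \<and>
     (\<forall>u\<in>X. \<forall>v\<in>X. \<exists>p. is_walk X {e\<in>E. e \<subseteq> X} p \<and> hd p = u \<and> last p = v)"

definition is_tree :: "'a set \<Rightarrow> 'a set set \<Rightarrow> bool" where
  "is_tree N ET \<longleftrightarrow> simple_graph N ET \<and> N \<noteq> {} \<and>
     (\<forall>u\<in>N. \<forall>v\<in>N. \<exists>!p. is_path_between N ET u v p)"

definition descendants :: "'a set \<Rightarrow> 'a set set \<Rightarrow> 'a \<Rightarrow> 'a \<Rightarrow> 'a set" where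
  "descendants N ET r t = {t'\<in>N. \<exists>p. is_path_between N ET r t' p \<and> t \<in> set p}"

definition gamma :: "'a set \<Rightarrow> 'a set set \<Rightarrow> 'a \<Rightarrow> ('a \<Rightarrow> 'b set) \<Rightarrow> 'a \<Rightarrow> 'b set" where
  "gamma N ET r \<beta> t = (\<Union>t'\<in>descendants N ET r t. \<beta> t')"

definition tree_decomposition ::
  "'v set \<Rightarrow> 'v set set \<Rightarrow> 't set \<Rightarrow> 't set set \<Rightarrow> 't \<Rightarrow> ('t \<Rightarrow> 'v set) \<Rightarrow> bool" where
  "tree_decomposition V E N ET r \<beta> \<longleftrightarrow>
     is_tree N ET \<and> r \<in> N \<and>
     (\<forall>t\<in>N. \<beta> t \<subseteq> V) \<and>
     (\<forall>v\<in>V. \<exists>t\<in>N. v \<in> \<beta> t) \<and>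
     (\<forall>e\<in>E. \<exists>t\<in>N. e \<subseteq> \<beta> t) \<and>
     (\<forall>v\<in>V. induces_connected N ET {t\<in>N. v \<in> \<beta> t})"

definition td_width :: "'t set \<Rightarrow> ('t \<Rightarrow> 'v set) \<Rightarrow> int" where
  "td_width N \<beta> = int (Max ((\<lambda>t. card (\<beta> t)) ` N)) - 1"

definition planar_graph :: "'a set \<Rightarrow> 'a set set \<Rightarrow> bool" where
  "planar_graph V E \<longleftrightarrow> simple_graph V E \<and>
     (\<exists>(f :: 'a \<Rightarrow> complex) (g :: 'a set \<Rightarrow> real \<Rightarrow> complex).
        inj_on f V \<and>
        (\<forall>e\<in>E. arc (g e) \<and> f ` e = {pathstart (g e), pathfinish (g e)} \<and>
                 path_image (g e) \<inter> f ` V = f ` e) \<and>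
        (\<forall>e\<in>E. \<forall>e'\<in>E. e \<noteq> e' \<longrightarrow> path_image (g e) \<inter> path_image (g e') \<subseteq> f ` (e \<inter> e')))"

definition bipartite_with :: "'a set \<Rightarrow> 'a set set \<Rightarrow> 'a set \<Rightarrow> 'a set \<Rightarrow> bool" where
  "bipartite_with V E W U \<longleftrightarrow> simple_graph V E \<and> V = W \<union> U \<and> W \<inter> U = {} \<and>
     (\<forall>e\<in>E. \<exists>w\<in>W. \<exists>u\<in>U. e = {w, u})"

text \<open>Edges of the half-square of B on W: pairs at distance exactly 2 in B.\<close>
definition half_square_edges :: "'a set set \<Rightarrow> 'a set \<Rightarrow> 'a set set" where
  "half_square_edges E W = {{x, y} | x y. x \<in> W \<and> y \<in> W \<and> x \<noteq> y \<and> {x, y} \<notin> E \<and>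
                                         (\<exists>z. {x, z} \<in> E \<and> {z, y} \<in> E)}"

definition corresponding_planar_bipartite ::
  "'a set \<Rightarrow> 'a set set \<Rightarrow> 'a set \<Rightarrow> 'a set \<Rightarrow> 'a set set \<Rightarrow> bool" where
  "corresponding_planar_bipartite VG EG W U EB \<longleftrightarrow>
     bipartite_with (W \<union> U) EB W U \<and> planar_graph (W \<union> U) EB \<and>
     VG = W \<and> EG = half_square_edges EB W"

end

theory Submission
  imports Defs
begin

text \<open>
  Edges: if xy is an edge of the half-square with middle vertex z, let u be the topmost node
  of the subtree of bags containing z.  The bags containing xz and zy lie below u, so x and y
  are in gamma(u) and hence in the new bag of u.
  Connectivity: if v enters the new bag of t only through a special neighbour s in the old
  bag, then v lies in an old bag at a descendant t' of t.  The tree path from t to t' runs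
  inside the union of the subtrees of s and of v (which meet in a bag containing sv), and each
  of its nodes has t' below it; so v is in the new bag at every node of the path, which joins t
  to the old, connected subtree of v.
\<close>

lemma is_walk_singleton [simp]: "is_walk V E [x] \<longleftrightarrow> x \<in> V"
  by (simp add: is_walk_def)

lemma is_walk_Cons_Cons:
  "is_walk V E (x # y # xs) \<longleftrightarrow> x \<in> V \<and> {x, y} \<in> E \<and> is_walk V E (y # xs)"
  unfolding is_walk_def by (auto simp: nth_Cons' less_Suc_eq_0_disj split: if_splits)

lemma is_walk_append:
  assumes "xs \<noteq> []"
  shows "is_walk V E (xs @ y # ys) \<longleftrightarrow>
           is_walk V E xs \<and> {last xs, y} \<in> E \<and> is_walk V E (y # ys)"
  using assms
proof (induction xs)
  case (Cons x xs)
  then show ?case by (cases xs) (auto simp: is_walk_Cons_Cons)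
qed simp

lemma is_walk_join:
  assumes "is_walk V E p" "is_walk V E q" "last p = hd q"
  shows "is_walk V E (p @ tl q)" "hd (p @ tl q) = hd p" "last (p @ tl q) = last q"
proof -
  from assms(1,2) obtain b qs where "p \<noteq> []" "q = b # qs"
    by (cases q) (auto simp: is_walk_def)
  with assms show "is_walk V E (p @ tl q)"
    by (cases qs) (auto simp: is_walk_append is_walk_Cons_Cons)
  from \<open>p \<noteq> []\<close> \<open>q = b # qs\<close> assms(3) show "hd (p @ tl q) = hd p" "last (p @ tl q) = last q"
    by (auto simp: last_append)
qed

lemma is_walk_rev: "is_walk V E p \<Longrightarrow> is_walk V E (rev p)"
proof (induction p)
  case (Cons x p)
  show ?case
  proof (cases p)
    case (Cons y ys)
    with Cons.prems Cons.IH have "is_walk V E (rev p @ [x])"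
      by (simp add: is_walk_append is_walk_Cons_Cons insert_commute del: append_assoc)
    then show ?thesis by simp
  qed (use Cons.prems in simp)
qed (simp add: is_walk_def)

lemma is_walk_suffix: "is_walk V E (xs @ ys) \<Longrightarrow> ys \<noteq> [] \<Longrightarrow> is_walk V E ys"
  by (metis append_Nil neq_Nil_conv is_walk_append)

lemma is_walk_prefix: "is_walk V E (xs @ ys) \<Longrightarrow> xs \<noteq> [] \<Longrightarrow> is_walk V E xs"
  by (metis append.right_neutral neq_Nil_conv is_walk_append)

lemma is_walk_restrict: "is_walk V E p \<Longrightarrow> set p \<subseteq> X \<Longrightarrow> is_walk X {e\<in>E. e \<subseteq> X} p"
  unfolding is_walk_def by (auto intro: nth_mem)

lemma is_walk_mono: "is_walk X F p \<Longrightarrow> X \<subseteq> V \<Longrightarrow> F \<subseteq> E \<Longrightarrow> is_walk V E p"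
  unfolding is_walk_def by blast

lemma walk_contains_path:
  "is_walk V E p \<Longrightarrow> \<exists>q. is_path_between V E (hd p) (last p) q \<and> set q \<subseteq> set p"
proof (induction p)
  case (Cons x p)
  show ?case
  proof (cases p)
    case Nil
    with Cons.prems show ?thesis by (intro exI[of _ "[x]"]) (simp add: is_path_between_def)
  next
    case (Cons y ys)
    with Cons.prems have "is_walk V E p" "{x, y} \<in> E" "x \<in> V"
      by (auto simp: is_walk_Cons_Cons)
    with Cons.IH obtain q where q: "is_path_between V E y (last p) q" "set q \<subseteq> set p"
      using Cons by auto
    show ?thesis
    proof (cases "x \<in> set q")
      case True
      then obtain as bs where "q = as @ x # bs" by (meson split_list)
      with q is_walk_suffix[of V E as "x # bs"] show ?thesis
        by (intro exI[of _ "x # bs"]) (auto simp: is_path_between_def Cons)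
    next
      case False
      from q obtain zs where "q = y # zs"
        by (cases q) (auto simp: is_path_between_def is_walk_def)
      with q False \<open>{x, y} \<in> E\<close> \<open>x \<in> V\<close> show ?thesis
        by (intro exI[of _ "x # q"]) (auto simp: is_path_between_def is_walk_Cons_Cons Cons)
    qed
  qed
qed (simp add: is_walk_def)

lemma is_path_between_suffix:
  assumes "is_path_between V E u w p" "x \<in> set p"
  obtains q where "is_path_between V E x w q" "set q \<subseteq> set p"
proof -
  from assms(2) obtain as bs where "p = as @ x # bs" by (meson split_list)
  with assms(1) is_walk_suffix[of V E as "x # bs"] show ?thesis
    by (intro that[of "x # bs"]) (auto simp: is_path_between_def)
qed

lemma is_path_between_first_entry:
  assumes "is_path_between V E u w p" "w \<in> X"
  obtains x q where "x \<in> X" "is_path_between V E u x q" "set q \<inter> X = {x}"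
proof -
  from assms(1) have "p \<noteq> []" "last p = w"
    by (simp_all add: is_path_between_def is_walk_def)
  with assms(2) have "\<exists>x\<in>set p. x \<in> X"
    by (metis last_in_set)
  from split_list_first_prop[OF this]
  obtain ys x zs where p: "p = ys @ x # zs" "x \<in> X" "\<forall>y\<in>set ys. y \<notin> X"
    by blast
  have "is_path_between V E u x (ys @ [x])"
    using assms(1) is_walk_prefix[of V E "ys @ [x]" zs]
    unfolding is_path_between_def p(1) by (cases ys) auto
  moreover have "set (ys @ [x]) \<inter> X = {x}"
    using p by auto
  ultimately show ?thesis
    using that p(2) by blast
qed

lemma is_path_between_append:
  assumes "is_path_between V E u v p" "is_path_between V E v w q" "set p \<inter> set q \<subseteq> {v}"
  shows "is_path_between V E u w (p @ tl q)"
proof -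
  from assms(2) obtain qs where q: "q = v # qs" "v \<notin> set qs" "distinct qs"
    by (cases q) (auto simp: is_path_between_def is_walk_def)
  with assms(3) have "set p \<inter> set qs = {}"
    by auto
  with assms(1,2) q show ?thesis
    using is_walk_join[of V E p q]
    by (auto simp: is_path_between_def is_walk_def[of V E p])
qed

lemma tree_path_exists: "is_tree N ET \<Longrightarrow> u \<in> N \<Longrightarrow> w \<in> N \<Longrightarrow> \<exists>p. is_path_between N ET u w p"
  unfolding is_tree_def by blast

lemma tree_path_unique:
  "is_tree N ET \<Longrightarrow> is_path_between N ET u w p \<Longrightarrow> is_path_between N ET u w q \<Longrightarrow> p = q"
  unfolding is_tree_def is_path_between_def is_walk_def
  by (metis hd_in_set last_in_set subsetD)

lemma tree_walk_contains_path:
  assumes "is_tree N ET" "is_walk N ET p" "is_path_between N ET (hd p) (last p) q"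
  shows "set q \<subseteq> set p"
  using assms walk_contains_path tree_path_unique by metis

lemma tree_path_subset_connected:
  assumes "is_tree N ET" "induces_connected N ET X" "u \<in> X" "w \<in> X"
    and "is_path_between N ET u w p"
  shows "set p \<subseteq> X"
proof -
  from assms(2-4) obtain q where q: "is_walk X {e\<in>ET. e \<subseteq> X} q" "hd q = u" "last q = w"
    unfolding induces_connected_def by blast
  moreover from assms(2) have "X \<subseteq> N"
    unfolding induces_connected_def by blast
  ultimately have "is_walk N ET q"
    using is_walk_mono by blast
  with assms q have "set p \<subseteq> set q"
    using tree_walk_contains_path by blast
  with q(1) show ?thesis
    unfolding is_walk_def by blast
qed

lemma tree_path_subset_union:
  assumes "is_tree N ET" "is_path_between N ET a b p" "is_path_between N ET b c q"
    and "is_path_between N ET a c w"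
  shows "set w \<subseteq> set p \<union> set q"
proof -
  from assms(3) obtain qs where "q = b # qs"
    by (cases q) (auto simp: is_path_between_def is_walk_def)
  with assms(2,3) have "is_walk N ET (p @ tl q)" "hd (p @ tl q) = a" "last (p @ tl q) = c"
    using is_walk_join[of N ET p q] by (auto simp: is_path_between_def)
  with assms(1,4) have "set w \<subseteq> set (p @ tl q)"
    using tree_walk_contains_path by metis
  with \<open>q = b # qs\<close> show ?thesis
    by auto
qed

lemma induces_connected_if_linked:
  assumes "induces_connected N ET Y" "Y \<subseteq> X" "X \<subseteq> N"
    and "\<And>t. t \<in> X \<Longrightarrow> \<exists>y\<in>Y. \<exists>p. is_walk X {e\<in>ET. e \<subseteq> X} p \<and> hd p = t \<and> last p = y"
  shows "induces_connected N ET X"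
proof -
  let ?F = "{e\<in>ET. e \<subseteq> X}"
  have "\<exists>p. is_walk X ?F p \<and> hd p = a \<and> last p = b" if "a \<in> X" "b \<in> X" for a b
  proof -
    obtain ya pa where a: "ya \<in> Y" "is_walk X ?F pa" "hd pa = a" "last pa = ya"
      using assms(4) \<open>a \<in> X\<close> by blast
    obtain yb pb where b: "yb \<in> Y" "is_walk X ?F pb" "hd pb = b" "last pb = yb"
      using assms(4) \<open>b \<in> X\<close> by blast
    obtain pY where Y: "is_walk Y {e\<in>ET. e \<subseteq> Y} pY" "hd pY = ya" "last pY = yb"
      using assms(1) a(1) b(1) unfolding induces_connected_def by blast
    have "{e\<in>ET. e \<subseteq> Y} \<subseteq> ?F"
      using assms(2) by blast
    with Y(1) assms(2) have "is_walk X ?F pY"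
      by (rule is_walk_mono)
    have rev_b: "is_walk X ?F (rev pb)" "hd (rev pb) = yb" "last (rev pb) = b"
      using b is_walk_rev by (auto simp: hd_rev last_rev)
    have aY: "is_walk X ?F (pa @ tl pY)" "hd (pa @ tl pY) = a" "last (pa @ tl pY) = yb"
      using is_walk_join[OF a(2) \<open>is_walk X ?F pY\<close>] a Y by simp_all
    show ?thesis
      using is_walk_join[OF aY(1) rev_b(1)] aY rev_b by metis
  qed
  with assms(3) show ?thesis
    unfolding induces_connected_def by blast
qed

lemma descendants_along_path:
  assumes "is_tree N ET" "t' \<in> descendants N ET r t" "is_path_between N ET t t' q" "w \<in> set q"
  shows "t' \<in> descendants N ET r w"
proof -
  from assms(2) obtain p where p: "t' \<in> N" "is_path_between N ET r t' p" "t \<in> set p"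
    unfolding descendants_def by blast
  obtain q' where q': "is_path_between N ET t t' q'" "set q' \<subseteq> set p"
    by (rule is_path_between_suffix[OF p(2,3)])
  have "w \<in> set p"
    using tree_path_unique[OF assms(1,3) q'(1)] q'(2) assms(4) by blast
  with p show ?thesis
    unfolding descendants_def by blast
qed

lemma connected_subtree_top:
  assumes "is_tree N ET" "r \<in> N" "induces_connected N ET X" "t \<in> X"
  obtains u where "u \<in> X" "X \<subseteq> descendants N ET r u"
proof -
  have XN: "X \<subseteq> N"
    using assms(3) unfolding induces_connected_def by blast
  obtain p where "is_path_between N ET r t p"
    using tree_path_exists[OF assms(1,2), of t] assms(4) XN by blast
  then obtain u q where u: "u \<in> X" "is_path_between N ET r u q" "set q \<inter> X = {u}"
    using assms(4) by (rule is_path_between_first_entry)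
  have "t' \<in> descendants N ET r u" if t': "t' \<in> X" for t'
  proof -
    obtain q' where q': "is_path_between N ET u t' q'"
      using tree_path_exists[OF assms(1), of u t'] u(1) t' XN by blast
    have "set q' \<subseteq> X"
      by (rule tree_path_subset_connected[OF assms(1,3) u(1) t' q'])
    with u(3) have "set q \<inter> set q' \<subseteq> {u}"
      by blast
    with u(2) q' have "is_path_between N ET r t' (q @ tl q')"
      by (rule is_path_between_append)
    moreover have "u \<in> set (q @ tl q')"
      using u(3) by auto
    ultimately show ?thesis
      using t' XN unfolding descendants_def by blast
  qed
  then show ?thesis
    using that[OF u(1)] by blast
qed

lemma tree_decomposition_cong:
  assumes "\<And>t. t \<in> N \<Longrightarrow> \<beta> t = \<beta>' t"
  shows "tree_decomposition V E N ET r \<beta> \<longleftrightarrow> tree_decomposition V E N ET r \<beta>'"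
proof -
  have "{t\<in>N. v \<in> \<beta> t} = {t\<in>N. v \<in> \<beta>' t}" for v
    using assms by auto
  with assms show ?thesis
    unfolding tree_decomposition_def by auto
qed

lemma bipartite_with_edge_sides:
  assumes "bipartite_with V E W U" "{x, y} \<in> E"
  shows "x \<in> W \<longleftrightarrow> y \<in> U" "x \<in> U \<longleftrightarrow> y \<in> W"
proof -
  from assms obtain w u where "w \<in> W" "u \<in> U" "{x, y} = {w, u}" "W \<inter> U = {}"
    unfolding bipartite_with_def by blast
  then show "x \<in> W \<longleftrightarrow> y \<in> U" "x \<in> U \<longleftrightarrow> y \<in> W"
    by (auto simp: doubleton_eq_iff)
qed

definition half_square_bag ::
  "'v set \<Rightarrow> 'v set \<Rightarrow> 'v set set \<Rightarrow> 't set \<Rightarrow> 't set set \<Rightarrow> 't \<Rightarrow> ('t \<Rightarrow> 'v set) \<Rightarrow> 't \<Rightarrow> 'v set"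
  where "half_square_bag W U EB N ET r \<beta> t =
           (\<beta> t \<inter> W) \<union> (\<Union>s\<in>\<beta> t \<inter> U. nbhd EB s \<inter> gamma N ET r \<beta> t)"

lemma half_square_bag_subset:
  assumes "bipartite_with (W \<union> U) EB W U"
  shows "half_square_bag W U EB N ET r \<beta> t \<subseteq> W"
  using bipartite_with_edge_sides(2)[OF assms]
  unfolding half_square_bag_def nbhd_def by blast

lemma half_square_bag_covers_edge:
  assumes td: "tree_decomposition (W \<union> U) EB N ET r \<beta>"
    and "z \<in> U" "{x, z} \<in> EB" "{z, y} \<in> EB"
  shows "\<exists>t\<in>N. {x, y} \<subseteq> half_square_bag W U EB N ET r \<beta> t"
proof -
  let ?X = "{t\<in>N. z \<in> \<beta> t}"
  from td have tree: "is_tree N ET" "r \<in> N" and conn: "induces_connected N ET ?X"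
    and edge_bag: "\<And>e. e \<in> EB \<Longrightarrow> \<exists>t\<in>N. e \<subseteq> \<beta> t"
    using \<open>z \<in> U\<close> unfolding tree_decomposition_def by auto
  obtain tx ty where tx: "tx \<in> N" "{x, z} \<subseteq> \<beta> tx" and ty: "ty \<in> N" "{z, y} \<subseteq> \<beta> ty"
    using edge_bag assms(3,4) by meson
  then obtain u where u: "u \<in> ?X" "?X \<subseteq> descendants N ET r u"
    using connected_subtree_top[OF tree conn, of tx] by blast
  with tx ty have "x \<in> gamma N ET r \<beta> u" "y \<in> gamma N ET r \<beta> u"
    unfolding gamma_def by blast+
  moreover have "x \<in> nbhd EB z" "y \<in> nbhd EB z"
    using assms(3,4) by (simp_all add: nbhd_def insert_commute)
  ultimately have "{x, y} \<subseteq> half_square_bag W U EB N ET r \<beta> u"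
    using u(1) \<open>z \<in> U\<close> unfolding half_square_bag_def by blast
  with u(1) show ?thesis
    by blast
qed

lemma half_square_bag_reaches_bag:
  assumes td: "tree_decomposition (W \<union> U) EB N ET r \<beta>"
    and "t \<in> N" "v \<in> W" "v \<in> half_square_bag W U EB N ET r \<beta> t"
  obtains t' q where "v \<in> \<beta> t'" "is_path_between N ET t t' q"
    "set q \<subseteq> {t\<in>N. v \<in> half_square_bag W U EB N ET r \<beta> t}"
proof (cases "v \<in> \<beta> t")
  case True
  with assms(2,4) show ?thesis
    by (intro that[of t "[t]"]) (auto simp: is_path_between_def)
next
  case False
  from td have tree: "is_tree N ET"
    and edge_bag: "\<And>e. e \<in> EB \<Longrightarrow> \<exists>t\<in>N. e \<subseteq> \<beta> t"
    and conn: "\<And>x. x \<in> W \<union> U \<Longrightarrow> induces_connected N ET {t\<in>N. x \<in> \<beta> t}"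
    unfolding tree_decomposition_def by auto
  from False assms(4) obtain s where s: "s \<in> \<beta> t" "s \<in> U" "{s, v} \<in> EB" "v \<in> gamma N ET r \<beta> t"
    unfolding half_square_bag_def nbhd_def by auto
  then obtain t' where t': "t' \<in> descendants N ET r t" "v \<in> \<beta> t'"
    unfolding gamma_def by blast
  then have "t' \<in> N"
    unfolding descendants_def by blast
  obtain te where te: "te \<in> N" "{s, v} \<subseteq> \<beta> te"
    using edge_bag[OF s(3)] by blast
  obtain q q1 q2 where q: "is_path_between N ET t t' q"
    and q1: "is_path_between N ET t te q1" and q2: "is_path_between N ET te t' q2"
    using tree_path_exists[OF tree] \<open>t \<in> N\<close> \<open>t' \<in> N\<close> te(1) by meson
  have "induces_connected N ET {t\<in>N. s \<in> \<beta> t}" "induces_connected N ET {t\<in>N. v \<in> \<beta> t}"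
    using conn s(2) \<open>v \<in> W\<close> by blast+
  then have "set q1 \<subseteq> {t\<in>N. s \<in> \<beta> t}" "set q2 \<subseteq> {t\<in>N. v \<in> \<beta> t}"
    using tree_path_subset_connected[OF tree _ _ _ q1] tree_path_subset_connected[OF tree _ _ _ q2]
      s(1) te t'(2) \<open>t \<in> N\<close> \<open>t' \<in> N\<close> by blast+
  then have q_bags: "set q \<subseteq> {t\<in>N. s \<in> \<beta> t \<or> v \<in> \<beta> t}"
    using tree_path_subset_union[OF tree q1 q2 q] by blast
  have "set q \<subseteq> {t\<in>N. v \<in> half_square_bag W U EB N ET r \<beta> t}"
  proof
    fix w
    assume "w \<in> set q"
    with tree t'(1) q have "t' \<in> descendants N ET r w"
      by (rule descendants_along_path)
    with t'(2) have "v \<in> gamma N ET r \<beta> w"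
      unfolding gamma_def by blast
    moreover have "v \<in> nbhd EB s"
      using s(3) by (simp add: nbhd_def)
    moreover have "w \<in> N" "s \<in> \<beta> w \<or> v \<in> \<beta> w"
      using \<open>w \<in> set q\<close> q_bags by blast+
    ultimately show "w \<in> {t\<in>N. v \<in> half_square_bag W U EB N ET r \<beta> t}"
      using s(2) \<open>v \<in> W\<close> unfolding half_square_bag_def by blast
  qed
  with t'(2) q show ?thesis
    by (rule that)
qed

lemma half_square_bag_connected:
  assumes td: "tree_decomposition (W \<union> U) EB N ET r \<beta>" and "v \<in> W"
  shows "induces_connected N ET {t\<in>N. v \<in> half_square_bag W U EB N ET r \<beta> t}"
    (is "induces_connected N ET ?X")
proof (rule induces_connected_if_linked)
  show "induces_connected N ET {t\<in>N. v \<in> \<beta> t}"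
    using td \<open>v \<in> W\<close> unfolding tree_decomposition_def by blast
  show "{t\<in>N. v \<in> \<beta> t} \<subseteq> ?X"
    using \<open>v \<in> W\<close> unfolding half_square_bag_def by blast
  show "?X \<subseteq> N"
    by blast
next
  fix t
  assume "t \<in> ?X"
  then have "t \<in> N" "v \<in> half_square_bag W U EB N ET r \<beta> t"
    by simp_all
  then obtain t' q where t': "v \<in> \<beta> t'" and q: "is_path_between N ET t t' q" "set q \<subseteq> ?X"
    by (rule half_square_bag_reaches_bag[OF td _ \<open>v \<in> W\<close>])
  from q(1) have walk: "is_walk N ET q" "hd q = t" "last q = t'"
    unfolding is_path_between_def by auto
  have "q \<noteq> []"
    using walk(1) by (simp add: is_walk_def)
  with walk(3) q(2) have "t' \<in> N"
    using last_in_set by blast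
  with t' walk(2,3) is_walk_restrict[OF walk(1) q(2)]
  show "\<exists>y\<in>{t\<in>N. v \<in> \<beta> t}. \<exists>p. is_walk ?X {e\<in>ET. e \<subseteq> ?X} p \<and> hd p = t \<and> last p = y"
    by (intro bexI[of _ t'] exI[of _ q]) simp_all
qed

theorem tree_decomposition_half_square:
  assumes bip: "bipartite_with (W \<union> U) EB W U"
    and td: "tree_decomposition (W \<union> U) EB N ET r \<beta>"
  shows "tree_decomposition W (half_square_edges EB W) N ET r (half_square_bag W U EB N ET r \<beta>)"
  unfolding tree_decomposition_def
proof (intro conjI ballI)
  show "is_tree N ET" "r \<in> N"
    using td unfolding tree_decomposition_def by blast+
  show "half_square_bag W U EB N ET r \<beta> t \<subseteq> W" for t
    by (rule half_square_bag_subset[OF bip])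
  show "induces_connected N ET {t\<in>N. v \<in> half_square_bag W U EB N ET r \<beta> t}" if "v \<in> W" for v
    by (rule half_square_bag_connected[OF td that])
  show "\<exists>t\<in>N. v \<in> half_square_bag W U EB N ET r \<beta> t" if "v \<in> W" for v
  proof -
    from td that obtain t where "t \<in> N" "v \<in> \<beta> t"
      unfolding tree_decomposition_def by blast
    with that show ?thesis
      unfolding half_square_bag_def by blast
  qed
  show "\<exists>t\<in>N. e \<subseteq> half_square_bag W U EB N ET r \<beta> t" if "e \<in> half_square_edges EB W" for e
  proof -
    from that obtain x y z where e: "e = {x, y}" "x \<in> W" "{x, z} \<in> EB" "{z, y} \<in> EB"
      unfolding half_square_edges_def by blast
    then have "z \<in> U"
      using bipartite_with_edge_sides(1)[OF bip] by blast
    with e show ?thesis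
      using half_square_bag_covers_edge[OF td] by blast
  qed
qed

theorem lemma9:
  fixes VG :: "'v set" and EG :: "'v set set"
    and U :: "'v set" and EB :: "'v set set"
    and l :: nat
    and N :: "'t set" and ET :: "'t set set" and r :: 't
    and \<beta> :: "'t \<Rightarrow> 'v set" and \<beta>' :: "'t \<Rightarrow> 'v set"
  assumes "corresponding_planar_bipartite VG EG VG U EB"
    and "tree_decomposition (VG \<union> U) EB N ET r \<beta>"
    and "td_width N \<beta> < int l"
    and "\<And>t. t \<in> N \<Longrightarrow> \<beta>' t = (\<beta> t \<inter> VG) \<union>
            (\<Union>s\<in>\<beta> t \<inter> U. nbhd EB s \<inter> gamma N ET r \<beta> t)"
  shows "tree_decomposition VG EG N ET r \<beta>'"
proof -
  from assms(1) have "bipartite_with (VG \<union> U) EB VG U" "EG = half_square_edges EB VG"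
    unfolding corresponding_planar_bipartite_def by auto
  with assms(2) have "tree_decomposition VG EG N ET r (half_square_bag VG U EB N ET r \<beta>)"
    by (simp add: tree_decomposition_half_square)
  with assms(4) show ?thesis
    by (subst tree_decomposition_cong[of N \<beta>' "half_square_bag VG U EB N ET r \<beta>"])
       (simp_all add: half_square_bag_def)
qed

end
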